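(* Let $n\ge1$, $s\in(0,1/2)$ and $\delta>0$. There exists $C>0$, depending only on $\delta$, $n$ and $s$, such that for every $u\in L^1(Q)$ with $\int_Q u(x)\,dx=0$, $$\iint_{Q\times Q}\frac{|u(x)-u(y)|}{|x-y|^{n+2s}}\,dx\,dy\le C\iint_{(Q\times Q)\cap\{|x-y|<\delta\}}\frac{|u(x)-u(y)|}{|x-y|^{n+2s}}\,dx\,dy.$$
   Context: $Q=(0,1)^n$. *)

theory Defs
  imports "HOL-Analysis.Analysis"
begin

definition unit_cube :: "(real ^ 'n) set" where
  "unit_cube = {x. \<forall>i. 0 < x $ i \<and> x $ i < 1}"

end

theory Submission
  imports Defs
begin

(* Split the double integral at |x - y| = delta. Where |x - y| >= delta the kernel
   |x - y|^(-p), p = n + 2s, is at most delta^(-p), so it suffices to bound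
   V(R) = integral of |u x - u y| over {|x - y| < R} with R = diam Q by V(r) for
   r = min delta 1, because the kernel is at least 1 where |x - y| < r.
   On a convex domain |u x - u y| <= |u x - u m| + |u m - u y| for the midpoint m,
   and the substitution y |-> m, with Jacobian 2^n, gives V(2r) <= 2^(n+1) V(r);
   finitely many doublings reach the diameter.  The midpoint argument requires u to be Borel, so u is
   first replaced by a Borel representative. *)

lemma lebesgue_affine:
  fixes t :: "'a::euclidean_space" and c :: real
  assumes "c \<noteq> 0"
  shows "lebesgue = density (distr lebesgue lebesgue (\<lambda>x. t + c *\<^sub>R x)) (\<lambda>_. \<bar>c\<bar> ^ DIM('a))"
    and "(\<lambda>x. t + c *\<^sub>R x) \<in> lebesgue \<rightarrow>\<^sub>M lebesgue"
  using lebesgue_affine_euclidean[where c="\<lambda>_::'a. c" and t=t]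
    lebesgue_affine_measurable[where c="\<lambda>_::'a. c" and t=t] assms
  unfolding scaleR_scaleR[symmetric] scaleR_sum_right[symmetric] euclidean_representation
    prod_constant
  by simp_all

lemma midpoint_in_convex: "convex S \<Longrightarrow> x \<in> S \<Longrightarrow> y \<in> S \<Longrightarrow> midpoint x y \<in> S"
  by (meson convex_contains_segment midpoint_in_closed_segment subsetD)

lemma ennreal_abs_diff_triangle:
  fixes a b c :: real
  shows "ennreal \<bar>a - c\<bar> \<le> ennreal \<bar>a - b\<bar> + ennreal \<bar>b - c\<bar>"
proof -
  have "\<bar>a - c\<bar> \<le> \<bar>a - b\<bar> + \<bar>b - c\<bar>"
    by linarith
  then show ?thesis
    by (simp add: ennreal_leI flip: ennreal_plus)
qed

locale bounded_convex_domain =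
  fixes S :: "'a::euclidean_space set"
  assumes convex_S: "convex S" and bounded_S: "bounded S"
begin

lemma lmeasurable_S: "S \<in> lmeasurable"
  using measurable_convex[OF convex_S bounded_S] .

lemma sets_lebesgue_S [measurable]: "S \<in> sets lebesgue"
  using lmeasurable_S by (rule fmeasurableD)

sublocale pair_sigma_finite "lebesgue_on S" "lebesgue_on S"
proof -
  interpret finite_measure "lebesgue_on S"
    by (rule finite_measure_lebesgue_on[OF lmeasurable_S])
  show "pair_sigma_finite (lebesgue_on S) (lebesgue_on S)" ..
qed

lemma measurable_id_borel: "(\<lambda>x. x) \<in> lebesgue_on S \<rightarrow>\<^sub>M borel"
  by (intro measurable_restrict_space1 measurable_completion) simp

lemma nn_integral_midpoint_le:
  fixes g :: "'a \<Rightarrow> ennreal"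
  assumes x: "x \<in> S" and g [measurable]: "g \<in> borel_measurable borel"
  shows "(\<integral>\<^sup>+y. indicator (ball x (2 * r)) y * g (midpoint x y) \<partial>lebesgue_on S)
    \<le> 2 ^ DIM('a) * (\<integral>\<^sup>+m. indicator (ball x r) m * g m \<partial>lebesgue_on S)"
proof -
  define T where "T = (\<lambda>m. - x + 2 *\<^sub>R m)"
  have T_measurable: "T \<in> lebesgue \<rightarrow>\<^sub>M lebesgue"
    unfolding T_def by (rule lebesgue_affine(2)) simp
  have lebesgue_T: "lebesgue = density (distr lebesgue lebesgue T) (\<lambda>_. ennreal (\<bar>2\<bar> ^ DIM('a)))"
    unfolding T_def by (rule lebesgue_affine(1)) simp
  have midpoint_T [simp]: "midpoint x (T m) = m" for m
    by (simp add: T_def midpoint_def algebra_simps)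
  have dist_T [simp]: "dist x (T m) = 2 * dist x m" for m
  proof -
    have "x - T m = 2 *\<^sub>R (x - m)"
      by (simp add: T_def scaleR_2 algebra_simps)
    then show ?thesis
      by (simp add: dist_norm)
  qed
  have T_in_S: "m \<in> S" if "T m \<in> S" for m
    using midpoint_in_convex[OF convex_S x that] by simp
  have [measurable]: "g \<in> borel_measurable lebesgue"
    by (intro measurable_completion) simp
  have [measurable]: "ball x r \<in> sets lebesgue"
    by (intro fmeasurableD lmeasurable_ball)
  let ?f = "\<lambda>y. indicator (ball x (2 * r)) y * g (midpoint x y) * indicator S y"
  have "(\<lambda>y. g (midpoint x y)) \<in> borel_measurable borel"
    unfolding midpoint_def
    by (intro measurable_compose[OF _ g] borel_measurable_continuous_onI continuous_intros)
  then have "(\<lambda>y. indicator (ball x (2 * r)) y * g (midpoint x y)) \<in> borel_measurable borel"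
    by (intro borel_measurable_times_ennreal borel_measurable_indicator borel_open open_ball)
  then have [measurable]:
    "(\<lambda>y. indicator (ball x (2 * r)) y * g (midpoint x y)) \<in> borel_measurable lebesgue"
    by (intro measurable_completion) simp
  have [measurable]: "?f \<in> borel_measurable lebesgue"
    by measurable
  have "(\<integral>\<^sup>+y. indicator (ball x (2 * r)) y * g (midpoint x y) \<partial>lebesgue_on S)
      = (\<integral>\<^sup>+y. ?f y \<partial>lebesgue)"
    by (simp add: nn_integral_restrict_space)
  also have "\<dots> = (\<integral>\<^sup>+y. ?f y \<partial>density (distr lebesgue lebesgue T) (\<lambda>_. ennreal (\<bar>2\<bar> ^ DIM('a))))"
    by (rule arg_cong[OF lebesgue_T])
  also have "\<dots> = (\<integral>\<^sup>+m. 2 ^ DIM('a) * ?f (T m) \<partial>lebesgue)"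
    by (simp add: nn_integral_density nn_integral_distr[OF T_measurable] flip: ennreal_power)
  also have "\<dots> \<le> (\<integral>\<^sup>+m. 2 ^ DIM('a) * (indicator (ball x r) m * g m * indicator S m) \<partial>lebesgue)"
    by (intro nn_integral_mono mult_left_mono) (auto simp: indicator_def T_in_S)
  also have "\<dots> = 2 ^ DIM('a) * (\<integral>\<^sup>+m. indicator (ball x r) m * g m \<partial>lebesgue_on S)"
    by (simp add: nn_integral_cmult nn_integral_restrict_space)
  finally show ?thesis .
qed

definition local_variation :: "('a \<Rightarrow> real) \<Rightarrow> real \<Rightarrow> ennreal" where
  "local_variation v r = (\<integral>\<^sup>+z. indicator {z. dist (fst z) (snd z) < r} z *
     ennreal \<bar>v (fst z) - v (snd z)\<bar> \<partial>(lebesgue_on S \<Otimes>\<^sub>M lebesgue_on S))"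

lemma indicator_dist_less_Pair: "indicator {z. dist (fst z) (snd z) < r} (x, y) = indicator (ball x r) y"
  by (simp add: indicator_def)

lemma local_variation_fst:
  assumes [measurable]: "v \<in> borel_measurable borel"
  shows "local_variation v r
    = (\<integral>\<^sup>+x. \<integral>\<^sup>+y. indicator (ball x r) y * ennreal \<bar>v x - v y\<bar> \<partial>lebesgue_on S \<partial>lebesgue_on S)"
proof -
  note measurable_id_borel[measurable]
  show ?thesis
    unfolding local_variation_def
    by (subst M1.nn_integral_fst[symmetric]) (measurable, simp add: indicator_dist_less_Pair)
qed

lemma local_variation_snd:
  assumes [measurable]: "v \<in> borel_measurable borel"
  shows "local_variation v r
    = (\<integral>\<^sup>+y. \<integral>\<^sup>+x. indicator (ball y r) x * ennreal \<bar>v x - v y\<bar> \<partial>lebesgue_on S \<partial>lebesgue_on S)"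
proof -
  note measurable_id_borel[measurable]
  show ?thesis
    unfolding local_variation_def
    by (subst nn_integral_snd[symmetric]) (measurable, simp add: indicator_def dist_commute)
qed

lemma borel_measurable_ball_integral:
  assumes [measurable]: "v \<in> borel_measurable borel"
  shows "(\<lambda>x. \<integral>\<^sup>+y. indicator (ball x r) y * ennreal \<bar>v x - v y\<bar> \<partial>lebesgue_on S)
    \<in> borel_measurable (lebesgue_on S)"
proof -
  note measurable_id_borel[measurable]
  have "(\<lambda>z. indicator {z. dist (fst z) (snd z) < r} z * ennreal \<bar>v (fst z) - v (snd z)\<bar>)
      \<in> borel_measurable (lebesgue_on S \<Otimes>\<^sub>M lebesgue_on S)"
    by measurable
  from M1.borel_measurable_nn_integral_fst[OF this] show ?thesis
    by (simp add: indicator_dist_less_Pair)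
qed

lemma local_variation_double:
  assumes v [measurable]: "v \<in> borel_measurable borel"
  shows "local_variation v (2 * r) \<le> 2 ^ Suc DIM('a) * local_variation v r"
proof -
  note measurable_id_borel[measurable]
  let ?M = "lebesgue_on S"
  define A where "A z = indicator {z. dist (fst z) (snd z) < 2 * r} z
    * ennreal \<bar>v (fst z) - v (midpoint (fst z) (snd z))\<bar>" for z :: "'a \<times> 'a"
  define B where "B z = indicator {z. dist (fst z) (snd z) < 2 * r} z
    * ennreal \<bar>v (midpoint (fst z) (snd z)) - v (snd z)\<bar>" for z :: "'a \<times> 'a"
  have [measurable]: "A \<in> borel_measurable (?M \<Otimes>\<^sub>M ?M)" "B \<in> borel_measurable (?M \<Otimes>\<^sub>M ?M)"
    unfolding A_def B_def midpoint_def by measurable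
  have A_le: "(\<integral>\<^sup>+z. A z \<partial>(?M \<Otimes>\<^sub>M ?M)) \<le> 2 ^ DIM('a) * local_variation v r"
  proof -
    have "(\<integral>\<^sup>+z. A z \<partial>(?M \<Otimes>\<^sub>M ?M)) = (\<integral>\<^sup>+x. \<integral>\<^sup>+y. A (x, y) \<partial>?M \<partial>?M)"
      by (rule M1.nn_integral_fst[symmetric]) simp
    also have "\<dots> \<le> (\<integral>\<^sup>+x. 2 ^ DIM('a) *
        \<integral>\<^sup>+y. indicator (ball x r) y * ennreal \<bar>v x - v y\<bar> \<partial>?M \<partial>?M)"
      using nn_integral_midpoint_le[where g="\<lambda>m. ennreal \<bar>v _ - v m\<bar>"]
      by (intro nn_integral_mono) (simp add: A_def indicator_dist_less_Pair)
    also have "\<dots> = 2 ^ DIM('a) *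
        (\<integral>\<^sup>+x. \<integral>\<^sup>+y. indicator (ball x r) y * ennreal \<bar>v x - v y\<bar> \<partial>?M \<partial>?M)"
      by (rule nn_integral_cmult) (rule borel_measurable_ball_integral[OF v])
    also have "\<dots> = 2 ^ DIM('a) * local_variation v r"
      by (simp add: local_variation_fst[OF v])
    finally show ?thesis .
  qed
  have B_le: "(\<integral>\<^sup>+z. B z \<partial>(?M \<Otimes>\<^sub>M ?M)) \<le> 2 ^ DIM('a) * local_variation v r"
  proof -
    have "(\<integral>\<^sup>+z. B z \<partial>(?M \<Otimes>\<^sub>M ?M)) = (\<integral>\<^sup>+y. \<integral>\<^sup>+x. B (x, y) \<partial>?M \<partial>?M)"
      by (rule nn_integral_snd[symmetric]) simp
    also have "\<dots> \<le> (\<integral>\<^sup>+y. 2 ^ DIM('a) *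
        \<integral>\<^sup>+x. indicator (ball y r) x * ennreal \<bar>v x - v y\<bar> \<partial>?M \<partial>?M)"
      using nn_integral_midpoint_le[where g="\<lambda>m. ennreal \<bar>v m - v _\<bar>"]
      by (intro nn_integral_mono) (simp add: B_def indicator_def dist_commute midpoint_sym)
    also have "\<dots> = 2 ^ DIM('a) *
        (\<integral>\<^sup>+y. \<integral>\<^sup>+x. indicator (ball y r) x * ennreal \<bar>v x - v y\<bar> \<partial>?M \<partial>?M)"
      using borel_measurable_ball_integral[of "\<lambda>x. - v x" r] v
      by (intro nn_integral_cmult) (simp add: abs_minus_commute)
    also have "\<dots> = 2 ^ DIM('a) * local_variation v r"
      by (simp add: local_variation_snd[OF v])
    finally show ?thesis .
  qed
  have "local_variation v (2 * r) \<le> (\<integral>\<^sup>+z. A z + B z \<partial>(?M \<Otimes>\<^sub>M ?M))"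
    unfolding local_variation_def A_def B_def distrib_left[symmetric]
    by (intro nn_integral_mono mult_left_mono ennreal_abs_diff_triangle) simp
  also have "\<dots> = (\<integral>\<^sup>+z. A z \<partial>(?M \<Otimes>\<^sub>M ?M)) + (\<integral>\<^sup>+z. B z \<partial>(?M \<Otimes>\<^sub>M ?M))"
    by (rule nn_integral_add) simp_all
  also have "\<dots> \<le> 2 ^ DIM('a) * local_variation v r + 2 ^ DIM('a) * local_variation v r"
    using A_le B_le by (rule add_mono)
  also have "\<dots> = 2 ^ Suc DIM('a) * local_variation v r"
    by (simp add: mult_2 distrib_right)
  finally show ?thesis .
qed

lemma local_variation_pow2:
  assumes "v \<in> borel_measurable borel"
  shows "local_variation v (2 ^ k * r) \<le> 2 ^ (Suc DIM('a) * k) * local_variation v r"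
proof (induction k)
  case 0
  show ?case by simp
next
  case (Suc k)
  have "local_variation v (2 ^ Suc k * r) = local_variation v (2 * (2 ^ k * r))"
    by (simp add: mult.assoc)
  also have "\<dots> \<le> 2 ^ Suc DIM('a) * local_variation v (2 ^ k * r)"
    by (rule local_variation_double[OF assms])
  also have "\<dots> \<le> 2 ^ Suc DIM('a) * (2 ^ (Suc DIM('a) * k) * local_variation v r)"
    by (rule mult_left_mono[OF Suc.IH]) simp
  also have "\<dots> = 2 ^ (Suc DIM('a) * Suc k) * local_variation v r"
    by (simp add: power_add mult.assoc)
  finally show ?case .
qed

definition pair_variation :: "('a \<Rightarrow> real) \<Rightarrow> ennreal" where
  "pair_variation v = (\<integral>\<^sup>+z. ennreal \<bar>v (fst z) - v (snd z)\<bar> \<partial>(lebesgue_on S \<Otimes>\<^sub>M lebesgue_on S))"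

lemma local_variation_eq_pair_variation:
  assumes "\<forall>x\<in>S. \<forall>y\<in>S. dist x y < R"
  shows "local_variation v R = pair_variation v"
  unfolding local_variation_def pair_variation_def
  by (intro nn_integral_cong) (use assms in \<open>auto simp: space_pair_measure\<close>)

definition singular_energy :: "('a \<Rightarrow> real) \<Rightarrow> real \<Rightarrow> ennreal" where
  "singular_energy v p = (\<integral>\<^sup>+z. ennreal (\<bar>v (fst z) - v (snd z)\<bar> / dist (fst z) (snd z) powr p)
     \<partial>(lebesgue_on S \<Otimes>\<^sub>M lebesgue_on S))"

definition near_singular_energy :: "('a \<Rightarrow> real) \<Rightarrow> real \<Rightarrow> real \<Rightarrow> ennreal" where
  "near_singular_energy v p \<delta> = (\<integral>\<^sup>+z. ennreal (indicator {z. dist (fst z) (snd z) < \<delta>} z *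
     \<bar>v (fst z) - v (snd z)\<bar> / dist (fst z) (snd z) powr p) \<partial>(lebesgue_on S \<Otimes>\<^sub>M lebesgue_on S))"

lemma local_variation_le_near_singular_energy:
  assumes "r \<le> \<delta>" "r \<le> 1" "0 \<le> p"
  shows "local_variation v r \<le> near_singular_energy v p \<delta>"
  unfolding local_variation_def near_singular_energy_def
proof (intro nn_integral_mono)
  fix z :: "'a \<times> 'a"
  obtain x y where z: "z = (x, y)"
    by (cases z)
  have "\<bar>v x - v y\<bar> \<le> \<bar>v x - v y\<bar> / dist x y powr p" if "dist x y < r"
  proof (cases "x = y")
    case False
    with that assms have "dist x y powr p \<le> 1"
      by (intro powr_le1) auto
    with False show ?thesis
      by (simp add: le_divide_eq mult_left_le)
  qed simp
  then show "indicator {z. dist (fst z) (snd z) < r} z * ennreal \<bar>v (fst z) - v (snd z)\<bar>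
    \<le> ennreal (indicator {z. dist (fst z) (snd z) < \<delta>} z * \<bar>v (fst z) - v (snd z)\<bar> /
        dist (fst z) (snd z) powr p)"
    using assms by (auto simp: z indicator_def ennreal_leI)
qed

lemma singular_energy_le_near_plus_pair_variation:
  assumes [measurable]: "v \<in> borel_measurable (lebesgue_on S)" and "0 < \<delta>" "0 \<le> p"
  shows "singular_energy v p
    \<le> near_singular_energy v p \<delta> + ennreal (\<delta> powr (- p)) * pair_variation v"
proof -
  note measurable_id_borel[measurable]
  let ?M = "lebesgue_on S \<Otimes>\<^sub>M lebesgue_on S"
  have pointwise: "\<bar>v x - v y\<bar> / dist x y powr p
    \<le> indicator {z. dist (fst z) (snd z) < \<delta>} z * \<bar>v x - v y\<bar> / dist x y powr p
      + \<delta> powr (- p) * \<bar>v x - v y\<bar>"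
    if "z = (x, y)" for x y z
  proof (cases "dist x y < \<delta>")
    case False
    with assms have "\<delta> powr p \<le> dist x y powr p" and "0 < dist x y"
      by (auto intro: powr_mono2)
    with assms have "\<bar>v x - v y\<bar> / dist x y powr p \<le> \<bar>v x - v y\<bar> / \<delta> powr p"
      by (intro divide_left_mono) auto
    with False that show ?thesis
      by (simp add: powr_minus divide_inverse mult.commute)
  qed (simp add: that)
  have "singular_energy v p
      \<le> (\<integral>\<^sup>+z. ennreal (indicator {z. dist (fst z) (snd z) < \<delta>} z *
            \<bar>v (fst z) - v (snd z)\<bar> / dist (fst z) (snd z) powr p)
          + ennreal (\<delta> powr (- p)) * ennreal \<bar>v (fst z) - v (snd z)\<bar> \<partial>?M)"
    unfolding singular_energy_def
    by (intro nn_integral_mono)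
      (simp add: pointwise[OF prod.collapse[symmetric]] ennreal_leI
        flip: ennreal_mult ennreal_plus del: ennreal_plus)
  also have "\<dots> = near_singular_energy v p \<delta> + ennreal (\<delta> powr (- p)) * pair_variation v"
    unfolding near_singular_energy_def pair_variation_def
    by (subst nn_integral_add) (simp_all add: nn_integral_cmult)
  finally show ?thesis .
qed

lemma ex_borel_representative:
  fixes u :: "'a \<Rightarrow> real"
  assumes "u \<in> borel_measurable (lebesgue_on S)"
  obtains g where "g \<in> borel_measurable borel" "AE x in lebesgue_on S. u x = g x"
proof -
  have "(\<lambda>x. indicator S x *\<^sub>R u x) \<in> borel_measurable lebesgue"
    using assms borel_measurable_restrict_space_iff[of S lebesgue u] by simp
  then obtain g where g: "g \<in> borel_measurable lborel"
    and "AE x in lborel. indicator S x *\<^sub>R u x = g x"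
    using completion_ex_borel_measurable_real by blast
  then have "AE x in lebesgue_on S. u x = g x"
    by (subst AE_restrict_space_iff)
      (auto dest!: AE_completion elim!: eventually_mono simp: indicator_def)
  with g that show ?thesis
    by simp
qed

lemma AE_pair_eq:
  fixes u g :: "'a \<Rightarrow> real"
  assumes [measurable]: "u \<in> borel_measurable (lebesgue_on S)" "g \<in> borel_measurable (lebesgue_on S)"
    and ae: "AE x in lebesgue_on S. u x = g x"
  shows "AE z in lebesgue_on S \<Otimes>\<^sub>M lebesgue_on S. u (fst z) = g (fst z) \<and> u (snd z) = g (snd z)"
proof (rule AE_pair_measure)
  show "AE x in lebesgue_on S. AE y in lebesgue_on S.
      u (fst (x, y)) = g (fst (x, y)) \<and> u (snd (x, y)) = g (snd (x, y))"
    using ae by (auto elim!: eventually_mono)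
qed measurable

lemma singular_energy_le_near_borel:
  assumes v: "v \<in> borel_measurable borel" and "0 < \<delta>" "0 \<le> p"
    and diam: "\<forall>x\<in>S. \<forall>y\<in>S. dist x y < 2 ^ k * min \<delta> 1"
  shows "singular_energy v p
    \<le> ennreal (1 + \<delta> powr (- p) * 2 ^ (Suc DIM('a) * k)) * near_singular_energy v p \<delta>"
proof -
  let ?N = "near_singular_energy v p \<delta>"
  have "pair_variation v = local_variation v (2 ^ k * min \<delta> 1)"
    by (rule local_variation_eq_pair_variation[OF diam, symmetric])
  also have "\<dots> \<le> 2 ^ (Suc DIM('a) * k) * local_variation v (min \<delta> 1)"
    by (rule local_variation_pow2[OF v])
  also have "\<dots> \<le> 2 ^ (Suc DIM('a) * k) * ?N"
    using assms by (intro mult_left_mono local_variation_le_near_singular_energy) auto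
  finally have pair_variation_le: "pair_variation v \<le> 2 ^ (Suc DIM('a) * k) * ?N" .
  have "singular_energy v p \<le> ?N + ennreal (\<delta> powr (- p)) * pair_variation v"
    using assms measurable_compose[OF measurable_id_borel v]
    by (intro singular_energy_le_near_plus_pair_variation) auto
  also have "\<dots> \<le> ?N + ennreal (\<delta> powr (- p)) * (2 ^ (Suc DIM('a) * k) * ?N)"
    by (intro add_left_mono mult_left_mono pair_variation_le) simp
  also have "\<dots> = ennreal (1 + \<delta> powr (- p) * 2 ^ (Suc DIM('a) * k)) * ?N"
    by (simp add: ennreal_mult distrib_right mult.assoc flip: ennreal_power)
  finally show ?thesis .
qed

theorem singular_energy_le_near:
  assumes "0 < \<delta>" "0 \<le> p"
  obtains C where "0 < C"
    and "\<And>u. u \<in> borel_measurable (lebesgue_on S) \<Longrightarrow>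
      singular_energy u p \<le> ennreal C * near_singular_energy u p \<delta>"
proof -
  obtain R where R: "\<forall>x\<in>S. \<forall>y\<in>S. dist x y \<le> R"
    using bounded_S bounded_two_points by blast
  obtain k :: nat where "R / min \<delta> 1 < 2 ^ k"
    using real_arch_pow[of 2 "R / min \<delta> 1"] by auto
  with assms have "R < 2 ^ k * min \<delta> 1"
    by (simp add: divide_less_eq)
  with R have diam: "\<forall>x\<in>S. \<forall>y\<in>S. dist x y < 2 ^ k * min \<delta> 1"
    by force
  show thesis
  proof (rule that)
    show "0 < 1 + \<delta> powr (- p) * 2 ^ (Suc DIM('a) * k)"
      by (intro add_pos_nonneg) auto
    fix u :: "'a \<Rightarrow> real"
    assume u: "u \<in> borel_measurable (lebesgue_on S)"
    then obtain g where g: "g \<in> borel_measurable borel" and ae: "AE x in lebesgue_on S. u x = g x"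
      by (rule ex_borel_representative)
    note ae_pair = AE_pair_eq[OF u measurable_compose[OF measurable_id_borel g] ae]
    have "singular_energy u p = singular_energy g p"
      and "near_singular_energy u p \<delta> = near_singular_energy g p \<delta>"
      unfolding singular_energy_def near_singular_energy_def
      by (intro nn_integral_cong_AE eventually_mono[OF ae_pair]; simp)+
    with singular_energy_le_near_borel[OF g assms diam]
    show "singular_energy u p
      \<le> ennreal (1 + \<delta> powr (- p) * 2 ^ (Suc DIM('a) * k)) * near_singular_energy u p \<delta>"
      by simp
  qed
qed

end

lemma unit_cube_eq_box: "(unit_cube :: (real^'n) set) = box 0 1"
  by (simp add: unit_cube_def mem_box_cart set_eq_iff)

theorem mainTheorem16:
  fixes s \<delta> :: real
  assumes "0 < s" and "s < 1/2" and "0 < \<delta>"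
  shows "\<exists>C::real. C > 0 \<and>
    (\<forall>u :: real ^ 'n \<Rightarrow> real.
       integrable (lebesgue_on (unit_cube :: (real ^ 'n) set)) u \<longrightarrow>
       integral\<^sup>L (lebesgue_on unit_cube) u = 0 \<longrightarrow>
       (\<integral>\<^sup>+ z. ennreal (\<bar>u (fst z) - u (snd z)\<bar> /
                 dist (fst z) (snd z) powr (real CARD('n) + 2 * s))
          \<partial>(lebesgue_on unit_cube \<Otimes>\<^sub>M lebesgue_on unit_cube))
       \<le> ennreal C *
         (\<integral>\<^sup>+ z. ennreal (indicator {z. dist (fst z) (snd z) < \<delta>} z *
                 \<bar>u (fst z) - u (snd z)\<bar> /
                 dist (fst z) (snd z) powr (real CARD('n) + 2 * s))
          \<partial>(lebesgue_on unit_cube \<Otimes>\<^sub>M lebesgue_on unit_cube)))"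
proof -
  interpret cube: bounded_convex_domain "unit_cube :: (real ^ 'n) set"
    by unfold_locales (simp_all add: unit_cube_eq_box)
  have "0 \<le> real CARD('n) + 2 * s"
    using assms by simp
  then obtain C where "0 < C"
    and C: "\<And>u. u \<in> borel_measurable (lebesgue_on unit_cube) \<Longrightarrow>
      cube.singular_energy u (real CARD('n) + 2 * s)
        \<le> ennreal C * cube.near_singular_energy u (real CARD('n) + 2 * s) \<delta>"
    using cube.singular_energy_le_near[OF \<open>0 < \<delta>\<close>] by blast
  show ?thesis
    using \<open>0 < C\<close> C[OF borel_measurable_integrable]
    unfolding cube.singular_energy_def cube.near_singular_energy_def
    by blast
qed

end
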